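(* Let $G$ be a finite group and let $S,S'$ be two partial rainbows on $G$ with $\langle S\rangle=\langle S'\rangle$. Then for each arrow $(K,H)\in S$ there exists $g\in G$ such that $(gKg^{-1},gHg^{-1})\in S'$.
   Context: For a finite group $G$, an arrow is a pair $(K,H)$ of subgroups with $K\leqslant H$; it is an identity arrow if $K=H$. A $G$-transfer system is a set of arrows containing all identity arrows and closed under composition ($(A,B),(B,C)\Rightarrow(A,C)$), conjugation ($(A,B)\Rightarrow(gAg^{-1},gBg^{-1})$ for $g\in G$) and restriction ($(A,B)$ and $L\leqslant B\Rightarrow(A\cap L,L)$). For a set $S$ of non-identity arrows, $\langle S\rangle$ is the smallest transfer system containing $S$. For a subgroup $K$, $P(K)$ denotes the sum of the exponents in the prime factorization of $|K|$. A rainbow on $\mathbb{N}$ is a finite set of pairs $\{(a_i,b_i)\}_{0\leqslant i\leqslant k}$ of natural numbers such that $i<j$ implies $a_i<a_j<b_j<b_i$. A partial rainbow on $G$ is a set $S$ of non-identity arrows such that (1) the set $\{(P(K),P(H)) : (K,H)\in S\}$ is a rainbow, and (2) for any $g\in G$ and $(K,H)\in S$, if $(gKg^{-1},gHg^{-1})\neq(K,H)$ then $(gKg^{-1},gHg^{-1})\notin S$. *)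

theory Defs
  imports "HOL-Algebra.Group" "HOL-Computational_Algebra.Primes"
begin

definition conjg :: "('a, 'b) monoid_scheme \<Rightarrow> 'a \<Rightarrow> 'a set \<Rightarrow> 'a set" where
  "conjg G g K = {g \<otimes>\<^bsub>G\<^esub> k \<otimes>\<^bsub>G\<^esub> inv\<^bsub>G\<^esub> g | k. k \<in> K}"

definition is_arrow :: "('a, 'b) monoid_scheme \<Rightarrow> 'a set \<times> 'a set \<Rightarrow> bool" where
  "is_arrow G a \<longleftrightarrow> subgroup (fst a) G \<and> subgroup (snd a) G \<and> fst a \<subseteq> snd a"

definition transfer_system :: "('a, 'b) monoid_scheme \<Rightarrow> ('a set \<times> 'a set) set \<Rightarrow> bool" where
  "transfer_system G T \<longleftrightarrow>
     (\<forall>a\<in>T. is_arrow G a) \<and>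
     (\<forall>H. subgroup H G \<longrightarrow> (H, H) \<in> T) \<and>
     (\<forall>A B C. (A, B) \<in> T \<and> (B, C) \<in> T \<longrightarrow> (A, C) \<in> T) \<and>
     (\<forall>A B g. (A, B) \<in> T \<and> g \<in> carrier G \<longrightarrow> (conjg G g A, conjg G g B) \<in> T) \<and>
     (\<forall>A B L. (A, B) \<in> T \<and> subgroup L G \<and> L \<subseteq> B \<longrightarrow> (A \<inter> L, L) \<in> T)"

definition generated_ts :: "('a, 'b) monoid_scheme \<Rightarrow> ('a set \<times> 'a set) set \<Rightarrow> ('a set \<times> 'a set) set" where
  "generated_ts G S = \<Inter> {T. transfer_system G T \<and> S \<subseteq> T}"

definition Pexp :: "'a set \<Rightarrow> nat" where
  "Pexp K = size (prime_factorization (card K))"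

definition rainbow :: "(nat \<times> nat) set \<Rightarrow> bool" where
  "rainbow R \<longleftrightarrow> (\<exists>(k::nat) (a::nat \<Rightarrow> nat) b.
      R = (\<lambda>i. (a i, b i)) ` {0..k} \<and>
      (\<forall>i j. i < j \<and> j \<le> k \<longrightarrow> a i < a j \<and> a j < b j \<and> b j < b i))"

definition partial_rainbow :: "('a, 'b) monoid_scheme \<Rightarrow> ('a set \<times> 'a set) set \<Rightarrow> bool" where
  "partial_rainbow G S \<longleftrightarrow>
     (\<forall>a\<in>S. is_arrow G a \<and> fst a \<noteq> snd a) \<and>
     rainbow ((\<lambda>(K, H). (Pexp K, Pexp H)) ` S) \<and>
     (\<forall>g\<in>carrier G. \<forall>(K, H)\<in>S.
        (conjg G g K, conjg G g H) \<noteq> (K, H) \<longrightarrow> (conjg G g K, conjg G g H) \<notin> S)"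

end

theory Submission
  imports Defs "HOL-Algebra.Coset"
begin

text \<open>Say that (A, B) lies below (K, H) up to conjugacy if A \<subseteq> gKg\<inverse> and B \<subseteq> gHg\<inverse>
  for some g. The identity arrows together with the arrows lying below some arrow of S up to
  conjugacy already form a transfer system, so every non-identity arrow of \<langle>S\<rangle> lies below
  an arrow of S up to conjugacy. Starting from (K, H) \<in> S \<subseteq> \<langle>S'\<rangle> this yields
  (K', H') \<in> S' above (K, H), and then (K'', H'') \<in> S above (K', H'). As P is monotone on
  subgroups and invariant under conjugation, P(K) \<le> P(K') \<le> P(K'') and
  P(H) \<le> P(H') \<le> P(H''); but no pair of a rainbow dominates another one componentwise, so
  these are equalities. A subgroup contained in another one with the same value of P equals it,
  hence (K, H) is a conjugate of (K', H').\<close>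

lemma conjg_eq_image: "conjg G g X = (\<lambda>k. g \<otimes>\<^bsub>G\<^esub> k \<otimes>\<^bsub>G\<^esub> inv\<^bsub>G\<^esub> g) ` X"
  unfolding conjg_def by auto

lemma conjg_mono: "X \<subseteq> Y \<Longrightarrow> conjg G g X \<subseteq> conjg G g Y"
  unfolding conjg_def by auto

context group
begin

lemma conjugation_hom: "g \<in> carrier G \<Longrightarrow> (\<lambda>k. g \<otimes> k \<otimes> inv g) \<in> hom G G"
  by (rule homI) (simp_all add: m_assoc, metis inv_closed l_inv l_one m_assoc m_closed)

lemma subgroup_conjg:
  assumes "subgroup X G" "g \<in> carrier G"
  shows "subgroup (conjg G g X) G"
proof -
  have "group_hom G G (\<lambda>k. g \<otimes> k \<otimes> inv g)"
    using conjugation_hom[OF assms(2)] by (simp add: group_hom_def group_hom_axioms_def is_group)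
  then show ?thesis
    unfolding conjg_eq_image using assms(1) by (rule group_hom.subgroup_img_is_subgroup)
qed

lemma card_conjg:
  assumes "X \<subseteq> carrier G" "g \<in> carrier G"
  shows "card (conjg G g X) = card X"
proof -
  have "inj_on (\<lambda>k. g \<otimes> k \<otimes> inv g) (carrier G)"
    using assms(2) by (intro inj_onI) simp
  then have "inj_on (\<lambda>k. g \<otimes> k \<otimes> inv g) X"
    using assms(1) by (rule inj_on_subset)
  then show ?thesis
    by (simp add: conjg_eq_image card_image)
qed

lemma conjg_conjg:
  assumes "X \<subseteq> carrier G" "g \<in> carrier G" "h \<in> carrier G"
  shows "conjg G h (conjg G g X) = conjg G (h \<otimes> g) X"
proof -
  have "h \<otimes> (g \<otimes> k \<otimes> inv g) \<otimes> inv h = h \<otimes> g \<otimes> k \<otimes> inv (h \<otimes> g)" if "k \<in> X" for k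
    using that assms by (simp add: inv_mult_group m_assoc subsetD)
  then show ?thesis
    by (simp add: conjg_eq_image image_image cong: image_cong)
qed

lemma conjg_one: "X \<subseteq> carrier G \<Longrightarrow> conjg G \<one> X = X"
  by (simp add: conjg_eq_image subsetD cong: image_cong)

lemma conjg_inv_conjg:
  assumes "X \<subseteq> carrier G" "g \<in> carrier G"
  shows "conjg G (inv g) (conjg G g X) = X"
  using assms by (simp add: conjg_conjg conjg_one)

end

lemma size_prime_factorization_mono:
  fixes a b :: nat
  assumes "a dvd b" "b \<noteq> 0"
  shows "size (prime_factorization a) \<le> size (prime_factorization b)"
proof -
  have "a \<noteq> 0" using assms by auto
  with assms show ?thesis
    by (intro size_mset_mono) (simp add: prime_factorization_subset_iff_dvd)
qed

lemma dvd_size_prime_factorization_eq_imp_eq: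
  fixes a b :: nat
  assumes "a dvd b" "b \<noteq> 0" "size (prime_factorization a) = size (prime_factorization b)"
  shows "a = b"
proof -
  have "a \<noteq> 0" using assms by auto
  with assms have "prime_factorization a \<subseteq># prime_factorization b"
    by (simp add: prime_factorization_subset_iff_dvd)
  with assms(3) have "prime_factorization a = prime_factorization b"
    using mset_subset_size subset_mset.le_imp_less_or_eq by fastforce
  with \<open>a \<noteq> 0\<close> \<open>b \<noteq> 0\<close> show ?thesis
    by (simp add: prime_factorization_unique)
qed

context group
begin

lemma card_subgroup_dvd:
  assumes "subgroup I G" "subgroup J G" "I \<subseteq> J"
  shows "card I dvd card J"
proof -
  have "card (rcosets\<^bsub>G\<lparr>carrier := J\<rparr>\<^esub> I) * card I = card J"
    using group.lagrange[OF subgroup_imp_group subgroup_incl] assms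
    by (simp add: order_def)
  then show ?thesis
    by (metis dvd_triv_right)
qed

lemma card_subgroup_pos:
  assumes "finite (carrier G)" "subgroup H G"
  shows "card H > 0"
proof -
  have "finite H"
    using finite_subset[OF subgroup.subset[OF assms(2)] assms(1)] .
  moreover have "H \<noteq> {}"
    using subgroup.one_closed[OF assms(2)] by blast
  ultimately show ?thesis
    by (simp add: card_gt_0_iff)
qed

lemma Pexp_mono:
  assumes "finite (carrier G)" "subgroup I G" "subgroup J G" "I \<subseteq> J"
  shows "Pexp I \<le> Pexp J"
  unfolding Pexp_def
  using size_prime_factorization_mono[OF card_subgroup_dvd[OF assms(2-4)]]
    card_subgroup_pos[OF assms(1,3)]
  by simp

lemma subgroup_eq_if_Pexp_eq:
  assumes "finite (carrier G)" "subgroup I G" "subgroup J G" "I \<subseteq> J" "Pexp I = Pexp J"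
  shows "I = J"
proof -
  have "card I = card J"
    using dvd_size_prime_factorization_eq_imp_eq[OF card_subgroup_dvd[OF assms(2-4)]]
      card_subgroup_pos[OF assms(1,3)] assms(5)
    by (simp add: Pexp_def)
  moreover have "finite J"
    using finite_subset[OF subgroup.subset[OF assms(3)] assms(1)] .
  ultimately show ?thesis
    using assms(4) card_subset_eq by blast
qed

lemma Pexp_conjg:
  assumes "X \<subseteq> carrier G" "g \<in> carrier G"
  shows "Pexp (conjg G g X) = Pexp X"
  using assms by (simp add: Pexp_def card_conjg)

lemma Pexp_le_if_subset_conjg:
  assumes "finite (carrier G)" "subgroup A G" "subgroup K G" "g \<in> carrier G" "A \<subseteq> conjg G g K"
  shows "Pexp A \<le> Pexp K"
  using Pexp_mono[OF assms(1,2) subgroup_conjg[OF assms(3,4)] assms(5)]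
    Pexp_conjg[OF subgroup.subset[OF assms(3)] assms(4)]
  by simp

lemma eq_conjg_if_Pexp_eq:
  assumes "finite (carrier G)" "subgroup A G" "subgroup K G" "g \<in> carrier G" "A \<subseteq> conjg G g K"
    and "Pexp A = Pexp K"
  shows "A = conjg G g K"
  using subgroup_eq_if_Pexp_eq[OF assms(1,2) subgroup_conjg[OF assms(3,4)] assms(5)] assms(6)
    Pexp_conjg[OF subgroup.subset[OF assms(3)] assms(4)]
  by simp

end

lemma rainbow_le_imp_eq:
  assumes "rainbow R" "(a, b) \<in> R" "(a', b') \<in> R" "a \<le> a'" "b \<le> b'"
  shows "a = a' \<and> b = b'"
proof -
  obtain k :: nat and f g where
    R: "R = (\<lambda>i. (f i, g i)) ` {0..k}" and
    nested: "\<And>i j. i < j \<Longrightarrow> j \<le> k \<Longrightarrow> f i < f j \<and> g j < g i"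
    using assms(1) unfolding rainbow_def by blast
  obtain i j where "i \<le> k" "a = f i" "b = g i" "j \<le> k" "a' = f j" "b' = g j"
    using assms(2,3) unfolding R by auto
  with nested assms(4,5) show ?thesis
    by (cases i j rule: linorder_cases) (auto dest: nested)
qed

definition below_conjugates ::
    "('a, 'b) monoid_scheme \<Rightarrow> ('a set \<times> 'a set) set \<Rightarrow> ('a set \<times> 'a set) set" where
  "below_conjugates G S = {(A, B). is_arrow G (A, B) \<and>
     (A = B \<or> (\<exists>(K, H)\<in>S. \<exists>g\<in>carrier G. A \<subseteq> conjg G g K \<and> B \<subseteq> conjg G g H))}"

lemma below_conjugates_trans:
  assumes AB: "(A, B) \<in> below_conjugates G S" and BC: "(B, C) \<in> below_conjugates G S"
  shows "(A, C) \<in> below_conjugates G S"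
proof (cases "A = B \<or> B = C")
  case True
  with AB BC show ?thesis by auto
next
  case False
  with BC obtain K H g where "(K, H) \<in> S" "g \<in> carrier G" "B \<subseteq> conjg G g K" "C \<subseteq> conjg G g H"
    unfolding below_conjugates_def by auto
  moreover from AB BC have "A \<subseteq> B" "is_arrow G (A, C)"
    unfolding below_conjugates_def is_arrow_def by auto
  ultimately show ?thesis
    unfolding below_conjugates_def by blast
qed

lemma (in group) conjg_below_conjugates:
  assumes S: "\<forall>a\<in>S. is_arrow G a" and AB: "(A, B) \<in> below_conjugates G S" and h: "h \<in> carrier G"
  shows "(conjg G h A, conjg G h B) \<in> below_conjugates G S"
proof -
  have "is_arrow G (A, B)"
    using AB by (simp add: below_conjugates_def)
  then have arrow: "is_arrow G (conjg G h A, conjg G h B)"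
    using h by (simp add: is_arrow_def subgroup_conjg conjg_mono)
  from AB consider "A = B"
    | K H g where "(K, H) \<in> S" "g \<in> carrier G" "A \<subseteq> conjg G g K" "B \<subseteq> conjg G g H"
    unfolding below_conjugates_def by auto
  then show ?thesis
  proof cases
    case 1
    with arrow show ?thesis by (simp add: below_conjugates_def)
  next
    case (2 K H g)
    then have "K \<subseteq> carrier G" "H \<subseteq> carrier G"
      using S subgroup.subset by (fastforce simp: is_arrow_def)+
    with 2 h have "conjg G h A \<subseteq> conjg G (h \<otimes> g) K" "conjg G h B \<subseteq> conjg G (h \<otimes> g) H"
      by (metis conjg_conjg conjg_mono)+
    with 2 h arrow show ?thesis
      unfolding below_conjugates_def by blast
  qed
qed

lemma (in group) below_conjugates_restrict:
  assumes AB: "(A, B) \<in> below_conjugates G S" and L: "subgroup L G" "L \<subseteq> B"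
  shows "(A \<inter> L, L) \<in> below_conjugates G S"
proof -
  have arrow: "is_arrow G (A \<inter> L, L)"
    using AB L subgroups_Inter_pair by (auto simp: below_conjugates_def is_arrow_def)
  from AB consider "A = B"
    | K H g where "(K, H) \<in> S" "g \<in> carrier G" "A \<subseteq> conjg G g K" "B \<subseteq> conjg G g H"
    unfolding below_conjugates_def by auto
  then show ?thesis
  proof cases
    case 1
    with L have "A \<inter> L = L" by blast
    with arrow show ?thesis by (simp add: below_conjugates_def)
  next
    case (2 K H g)
    with L have "A \<inter> L \<subseteq> conjg G g K" "L \<subseteq> conjg G g H" by blast+
    with 2 arrow show ?thesis
      unfolding below_conjugates_def by blast
  qed
qed

lemma (in group) transfer_system_below_conjugates:
  assumes "\<forall>a\<in>S. is_arrow G a"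
  shows "transfer_system G (below_conjugates G S)"
  unfolding transfer_system_def
proof (intro conjI allI impI ballI)
  let ?T = "below_conjugates G S"
  show "is_arrow G a" if "a \<in> ?T" for a
    using that by (auto simp: below_conjugates_def)
  show "(H, H) \<in> ?T" if "subgroup H G" for H
    using that by (simp add: below_conjugates_def is_arrow_def)
  show "(A, C) \<in> ?T" if "(A, B) \<in> ?T \<and> (B, C) \<in> ?T" for A B C
    using that below_conjugates_trans by blast
  show "(conjg G h A, conjg G h B) \<in> ?T" if "(A, B) \<in> ?T \<and> h \<in> carrier G" for A B h
    using that assms conjg_below_conjugates by blast
  show "(A \<inter> L, L) \<in> ?T" if "(A, B) \<in> ?T \<and> subgroup L G \<and> L \<subseteq> B" for A B L
    using that below_conjugates_restrict by blast
qed

lemma (in group) subset_below_conjugates: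
  assumes "\<forall>a\<in>S. is_arrow G a"
  shows "S \<subseteq> below_conjugates G S"
proof clarify
  fix K H assume KH: "(K, H) \<in> S"
  with assms have arrow: "is_arrow G (K, H)" by blast
  then have "conjg G \<one> K = K" "conjg G \<one> H = H"
    by (simp_all add: is_arrow_def conjg_one subgroup.subset)
  then have "\<exists>(K', H')\<in>S. \<exists>g\<in>carrier G. K \<subseteq> conjg G g K' \<and> H \<subseteq> conjg G g H'"
    by (intro bexI[OF _ KH]) auto
  with arrow show "(K, H) \<in> below_conjugates G S"
    by (simp add: below_conjugates_def)
qed

lemma (in group) generated_ts_below_conjugates:
  assumes "\<forall>a\<in>S. is_arrow G a" "(A, B) \<in> generated_ts G S" "A \<noteq> B"
  obtains K H g where "(K, H) \<in> S" "g \<in> carrier G" "A \<subseteq> conjg G g K" "B \<subseteq> conjg G g H"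
proof -
  have "generated_ts G S \<subseteq> below_conjugates G S"
    unfolding generated_ts_def
    using transfer_system_below_conjugates subset_below_conjugates assms(1) by blast
  with assms(2) have "(A, B) \<in> below_conjugates G S" by blast
  with assms(3) that show ?thesis
    unfolding below_conjugates_def by auto
qed

lemma (in group) arrow_conjugate_in_partial_rainbow:
  assumes finite: "finite (carrier G)"
    and rainbows: "partial_rainbow G S" "partial_rainbow G S'"
    and same_ts: "generated_ts G S = generated_ts G S'"
    and KH: "(K, H) \<in> S"
  shows "\<exists>g\<in>carrier G. (conjg G g K, conjg G g H) \<in> S'"
proof -
  have arrows: "\<forall>a\<in>S. is_arrow G a" "\<forall>a\<in>S'. is_arrow G a"
    and non_identity: "\<forall>a\<in>S. fst a \<noteq> snd a" "\<forall>a\<in>S'. fst a \<noteq> snd a"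
    and rainbow: "rainbow ((\<lambda>(K, H). (Pexp K, Pexp H)) ` S)"
    using rainbows by (simp_all add: partial_rainbow_def)
  from KH have "(K, H) \<in> generated_ts G S'" "K \<noteq> H"
    using same_ts non_identity(1) unfolding generated_ts_def by auto
  then obtain K' H' g where KH': "(K', H') \<in> S'" and g: "g \<in> carrier G"
    and below': "K \<subseteq> conjg G g K'" "H \<subseteq> conjg G g H'"
    using generated_ts_below_conjugates[OF arrows(2)] by blast
  then have "(K', H') \<in> generated_ts G S" "K' \<noteq> H'"
    using same_ts non_identity(2) unfolding generated_ts_def by auto
  then obtain K'' H'' h where KH'': "(K'', H'') \<in> S" and h: "h \<in> carrier G"
    and below'': "K' \<subseteq> conjg G h K''" "H' \<subseteq> conjg G h H''"
    using generated_ts_below_conjugates[OF arrows(1)] by blast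
  have subgroups: "subgroup X G" if "X \<in> {K, H, K', H', K'', H''}" for X
    using that arrows KH KH' KH'' by (auto simp: is_arrow_def)
  have le: "Pexp K \<le> Pexp K'" "Pexp K' \<le> Pexp K''" "Pexp H \<le> Pexp H'" "Pexp H' \<le> Pexp H''"
    using Pexp_le_if_subset_conjg finite subgroups g h below' below'' by simp_all
  have "(Pexp K, Pexp H) \<in> (\<lambda>(K, H). (Pexp K, Pexp H)) ` S"
    "(Pexp K'', Pexp H'') \<in> (\<lambda>(K, H). (Pexp K, Pexp H)) ` S"
    using KH KH'' by force+
  with le have "Pexp K = Pexp K'' \<and> Pexp H = Pexp H''"
    using rainbow_le_imp_eq[OF rainbow] by (meson order_trans)
  with le have "K = conjg G g K'" "H = conjg G g H'"
    using eq_conjg_if_Pexp_eq finite subgroups g below' by simp_all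
  moreover have "K' \<subseteq> carrier G" "H' \<subseteq> carrier G"
    using subgroups[THEN subgroup.subset] by simp_all
  ultimately have "conjg G (inv g) K = K'" "conjg G (inv g) H = H'"
    using g by (simp_all add: conjg_inv_conjg)
  with KH' g show ?thesis
    by (intro bexI[of _ "inv g"]) simp_all
qed

theorem proposition3p4:
  fixes G :: "('a, 'b) monoid_scheme"
    and S S' :: "('a set \<times> 'a set) set"
  assumes "group G" and "finite (carrier G)"
    and "partial_rainbow G S" and "partial_rainbow G S'"
    and "generated_ts G S = generated_ts G S'"
  shows "\<forall>(K, H)\<in>S. \<exists>g\<in>carrier G. (conjg G g K, conjg G g H) \<in> S'"
  using group.arrow_conjugate_in_partial_rainbow[OF assms] by blast

end
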